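(* Let $m>0$ be an even integer. If there exists a classical deterministic winning strategy for the matching game with parameter $m$, then there exist a graph $G=(V,E)$ with $|V|=m$ and a function $h:E\to\{0,1\}$ such that (1) there are at least $\dfrac{2^m}{2^{\lceil\log_2 m\rceil}}$ colourings of $G$ according to $h$, and (2) $G$ contains a connected component with more than $\frac{m}{2}$ vertices. (Equivalently: to show there is no classical deterministic winning strategy for parameter $m$, it suffices to show no such $G$ and $h$ exist.)
   Context: A perfect matching on $\{0,\ldots,m-1\}$ ($m$ even) is a partition of this set into $m/2$ sets of cardinality 2; $M_m$ denotes the set of all perfect matchings. Let $L=\lceil\log_2 m\rceil$. For $n\in\{0,\ldots,m-1\}$, $\bar n\in\{0,1\}^L$ is the $L$-bit binary representation of $n$, most significant bit first. On bit strings $\oplus$ is bitwise, and $u\cdot v=\bigoplus_i(u_i\wedge v_i)$. The matching game with parameter $m$: Alice receives $x\in\{0,1\}^m$ and outputs $a\in\{0,1\}^L$; Bob receives $y\in M_m$ and outputs a two-element set $\{b_1,b_2\}\subseteq\{0,\ldots,m-1\}$ and a string $b\in\{0,1\}^L$; they win on question $(x,y)$ iff $\{b_1,b_2\}\in y$ and $x_{b_1}\oplus x_{b_2}=(\bar b_1\oplus\bar b_2)\cdot(a\oplus b)$. A classical deterministic strategy is a pair of functions $s_A:\{0,1\}^m\to\{0,1\}^L$ and $s_B:M_m\to\{\text{two-element subsets of }\{0,\ldots,m-1\}\}\times\{0,1\}^L$; it is winning if $(s_A(x),s_B(y))$ wins on every question $(x,y)\in\{0,1\}^m\times M_m$. Given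 a graph $G=(V,E)$ and $h:E\to\{0,1\}$, a colouring of $G$ according to $h$ is a function $c:V\to\{0,1\}$ with $c(u)\oplus c(v)=h(\{u,v\})$ for every edge $\{u,v\}\in E$. A connected component is a nonempty maximal connected induced subgraph. *)

theory Defs
  imports Complex_Main "HOL-Library.FuncSet"
begin

text \<open>Bit strings are boolean lists (True = 1).\<close>

definition Lbits :: "nat \<Rightarrow> nat" where
  "Lbits m = nat \<lceil>log 2 (real m)\<rceil>"

definition bin :: "nat \<Rightarrow> nat \<Rightarrow> bool list" where
  "bin L n = map (\<lambda>i. odd (n div 2 ^ (L - 1 - i))) [0..<L]"

definition xorl :: "bool list \<Rightarrow> bool list \<Rightarrow> bool list" where
  "xorl u v = map2 (\<lambda>p q. p \<noteq> q) u v"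

definition dotp :: "bool list \<Rightarrow> bool list \<Rightarrow> bool" where
  "dotp u v = foldr (\<lambda>p q. p \<noteq> q) (map2 (\<and>) u v) False"

definition perfect_matching :: "nat \<Rightarrow> nat set set \<Rightarrow> bool" where
  "perfect_matching m y \<longleftrightarrow>
     (\<forall>e\<in>y. card e = 2) \<and> \<Union>y = {0..<m} \<and>
     (\<forall>e\<in>y. \<forall>e'\<in>y. e \<noteq> e' \<longrightarrow> e \<inter> e' = {})"

definition wins :: "nat \<Rightarrow> bool list \<Rightarrow> nat set set \<Rightarrow> bool list \<Rightarrow> nat set \<times> bool list \<Rightarrow> bool" where
  "wins m x y a eb \<longleftrightarrow> fst eb \<in> y \<and>
     (\<exists>b1 b2. b1 \<noteq> b2 \<and> fst eb = {b1, b2} \<and>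
        ((x ! b1 \<noteq> x ! b2) = dotp (xorl (bin (Lbits m) b1) (bin (Lbits m) b2)) (xorl a (snd eb))))"

definition classical_winning_strategy_exists :: "nat \<Rightarrow> bool" where
  "classical_winning_strategy_exists m \<longleftrightarrow>
    (\<exists>(sA :: bool list \<Rightarrow> bool list) (sB :: nat set set \<Rightarrow> nat set \<times> bool list).
       (\<forall>x. length x = m \<longrightarrow> length (sA x) = Lbits m) \<and>
       (\<forall>y. perfect_matching m y \<longrightarrow>
           card (fst (sB y)) = 2 \<and> fst (sB y) \<subseteq> {0..<m} \<and> length (snd (sB y)) = Lbits m) \<and>
       (\<forall>x y. length x = m \<longrightarrow> perfect_matching m y \<longrightarrow> wins m x y (sA x) (sB y)))"

definition graph :: "'a set \<Rightarrow> 'a set set \<Rightarrow> bool" where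
  "graph V E \<longleftrightarrow> finite V \<and> (\<forall>e\<in>E. e \<subseteq> V \<and> card e = 2)"

definition colouring :: "'a set \<Rightarrow> 'a set set \<Rightarrow> ('a set \<Rightarrow> bool) \<Rightarrow> ('a \<Rightarrow> bool) \<Rightarrow> bool" where
  "colouring V E h c \<longleftrightarrow> (\<forall>u v. {u, v} \<in> E \<longrightarrow> (c u \<noteq> c v) = h {u, v})"

definition colourings :: "'a set \<Rightarrow> 'a set set \<Rightarrow> ('a set \<Rightarrow> bool) \<Rightarrow> ('a \<Rightarrow> bool) set" where
  "colourings V E h = {c \<in> V \<rightarrow>\<^sub>E (UNIV :: bool set). colouring V E h c}"

definition induced_connected :: "'a set set \<Rightarrow> 'a set \<Rightarrow> bool" where
  "induced_connected E C \<longleftrightarrow> C \<noteq> {} \<and>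
     (\<forall>u\<in>C. \<forall>v\<in>C. (u, v) \<in> ({(a, b). {a, b} \<in> E \<and> a \<in> C \<and> b \<in> C})\<^sup>*)"

definition connected_component :: "'a set \<Rightarrow> 'a set set \<Rightarrow> 'a set \<Rightarrow> bool" where
  "connected_component V E C \<longleftrightarrow> C \<subseteq> V \<and> induced_connected E C \<and>
     (\<forall>D. C \<subset> D \<and> D \<subseteq> V \<longrightarrow> \<not> induced_connected E D)"

end

theory Submission
  imports Defs
begin

text \<open>Fix an answer a of Alice given on at least 2^m / 2^L inputs. Against a fixed matching y
  Bob's answer is fixed, so for every input x with answer a the winning condition determines the
  parity x_u \<oplus> x_v on Bob's edge {u, v} independently of x. Hence all these inputs are colourings
  of the graph of Bob's possible edges, labelled by the parities of one of them. If every component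
  of that graph had at most m/2 vertices, sorting the vertices by component and pairing positions
  i and i + m/2 would give a perfect matching whose pairs all join different components; but Bob's
  answer to it is one of its pairs and an edge of the graph.\<close>

definition adjacent :: "'a set set \<Rightarrow> ('a \<times> 'a) set" where
  "adjacent E = {(a, b). {a, b} \<in> E}"

definition component_of :: "'a set set \<Rightarrow> 'a \<Rightarrow> 'a set" where
  "component_of E v = {u. (v, u) \<in> (adjacent E)\<^sup>*}"

lemma sym_rtrancl_adjacent: "sym ((adjacent E)\<^sup>*)"
  by (rule sym_rtrancl) (auto simp: sym_def adjacent_def insert_commute)

lemma component_of_subset:
  assumes "graph V E" "v \<in> V"
  shows "component_of E v \<subseteq> V"
proof
  fix u assume "u \<in> component_of E v"
  hence "(v, u) \<in> (adjacent E)\<^sup>*" by (simp add: component_of_def)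
  thus "u \<in> V"
  proof (cases rule: rtranclE)
    case (step a)
    hence "{a, u} \<in> E" by (simp add: adjacent_def)
    thus ?thesis using assms by (auto simp: graph_def)
  qed (use assms in simp)
qed

lemma component_of_eq:
  assumes "(u, w) \<in> (adjacent E)\<^sup>*"
  shows "component_of E u = component_of E w"
  using assms sym_rtrancl_adjacent[of E] unfolding component_of_def sym_def
  by (blast intro: rtrancl_trans)

lemma rtrancl_adjacent_within_component:
  assumes "(v, u) \<in> (adjacent E)\<^sup>*"
  shows "(v, u) \<in> {(a, b). {a, b} \<in> E \<and> a \<in> component_of E v \<and> b \<in> component_of E v}\<^sup>*"
  using assms
proof (induction rule: rtrancl_induct)
  case (step y z)
  hence "y \<in> component_of E v" "z \<in> component_of E v" "{y, z} \<in> E"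
    by (auto simp: component_of_def adjacent_def intro: rtrancl_into_rtrancl)
  with step.IH show ?case by (auto intro: rtrancl_into_rtrancl)
qed simp

lemma component_of_Min:
  assumes "graph V E" "v \<in> V"
  shows "component_of E (Min (component_of E v)) = component_of E v"
proof -
  have "finite (component_of E v)"
    using component_of_subset[OF assms] finite_subset assms(1) by (auto simp: graph_def)
  moreover have "v \<in> component_of E v"
    by (simp add: component_of_def)
  ultimately have "Min (component_of E v) \<in> component_of E v"
    using Min_in by blast
  hence "(v, Min (component_of E v)) \<in> (adjacent E)\<^sup>*"
    by (simp add: component_of_def)
  thus ?thesis
    by (rule component_of_eq[symmetric])
qed

lemma connected_component_component_of:
  assumes "graph V E" "v \<in> V"
  shows "connected_component V E (component_of E v)"
  unfolding connected_component_def
proof (intro conjI allI impI)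
  let ?C = "component_of E v"
  let ?R = "{(a, b). {a, b} \<in> E \<and> a \<in> ?C \<and> b \<in> ?C}"
  show "?C \<subseteq> V" using component_of_subset[OF assms] .
  have sym_R: "sym (?R\<^sup>*)"
    by (rule sym_rtrancl) (auto simp: sym_def insert_commute)
  have from_v: "(v, u) \<in> ?R\<^sup>*" if "u \<in> ?C" for u
    using that rtrancl_adjacent_within_component by (simp add: component_of_def)
  show "induced_connected E ?C"
    unfolding induced_connected_def
  proof (intro conjI ballI)
    show "?C \<noteq> {}" by (auto simp: component_of_def)
    fix u w assume "u \<in> ?C" "w \<in> ?C"
    hence "(u, v) \<in> ?R\<^sup>*" "(v, w) \<in> ?R\<^sup>*"
      using from_v sym_R by (auto simp: sym_def)
    thus "(u, w) \<in> ?R\<^sup>*" by (rule rtrancl_trans)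
  qed
  fix D assume D: "?C \<subset> D \<and> D \<subseteq> V"
  show "\<not> induced_connected E D"
  proof
    assume "induced_connected E D"
    moreover obtain d where d: "d \<in> D" "d \<notin> ?C" using D by blast
    moreover have "v \<in> D" using D by (auto simp: component_of_def)
    ultimately have "(v, d) \<in> {(a, b). {a, b} \<in> E \<and> a \<in> D \<and> b \<in> D}\<^sup>*"
      unfolding induced_connected_def by blast
    hence "(v, d) \<in> (adjacent E)\<^sup>*"
      by (rule rtrancl_mono[THEN subsetD, rotated]) (auto simp: adjacent_def)
    thus False using d by (simp add: component_of_def)
  qed
qed

lemma perfect_matching_halves:
  assumes "distinct xs" "set xs = {0..<2 * h}"
  shows "perfect_matching (2 * h) ((\<lambda>i. {xs ! i, xs ! (i + h)}) ` {..<h})"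
proof -
  let ?pair = "\<lambda>i. {xs ! i, xs ! (i + h)}"
  have len: "length xs = 2 * h"
    using distinct_card[OF assms(1)] assms(2) by simp
  have nth_eq: "xs ! i = xs ! j \<longleftrightarrow> i = j" if "i < 2 * h" "j < 2 * h" for i j
    using nth_eq_iff_index_eq[OF assms(1)] that len by simp
  have "\<forall>e\<in>?pair ` {..<h}. card e = 2"
    using nth_eq by fastforce
  moreover have "\<Union> (?pair ` {..<h}) = {0..<2 * h}"
  proof (rule equalityI[OF _ subsetI])
    show "\<Union> (?pair ` {..<h}) \<subseteq> {0..<2 * h}"
      using len assms(2) nth_mem by fastforce
    fix w assume "w \<in> {0..<2 * h}"
    then obtain j where j: "j < 2 * h" "w = xs ! j"
      using assms(2) len by (metis in_set_conv_nth)
    show "w \<in> \<Union> (?pair ` {..<h})"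
    proof (cases "j < h")
      case False
      hence "j - h < h" "w = xs ! (j - h + h)" using j by auto
      thus ?thesis by blast
    qed (use j in auto)
  qed
  moreover have "\<forall>e\<in>?pair ` {..<h}. \<forall>e'\<in>?pair ` {..<h}. e \<noteq> e' \<longrightarrow> e \<inter> e' = {}"
  proof (intro ballI impI)
    fix e e' assume "e \<in> ?pair ` {..<h}" "e' \<in> ?pair ` {..<h}" "e \<noteq> e'"
    then obtain i i' where "i < h" "i' < h" "i \<noteq> i'" "e = ?pair i" "e' = ?pair i'"
      by blast
    thus "e \<inter> e' = {}"
      using nth_eq[of i i'] nth_eq[of i "i' + h"] nth_eq[of "i + h" i'] nth_eq[of "i + h" "i' + h"]
      by auto
  qed
  ultimately show ?thesis
    unfolding perfect_matching_def by blast
qed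

lemma sorted_key_nth_half_apart_differs:
  fixes key :: "'a \<Rightarrow> 'b::linorder"
  assumes "sorted (map key xs)" "distinct xs" "length xs = 2 * h" "i < h"
    and small: "\<And>w. w \<in> set xs \<Longrightarrow> card {v \<in> set xs. key v = key w} \<le> h"
  shows "key (xs ! i) \<noteq> key (xs ! (i + h))"
proof
  assume eq: "key (xs ! i) = key (xs ! (i + h))"
  let ?class = "{v \<in> set xs. key v = key (xs ! i)}"
  have mono: "key (xs ! a) \<le> key (xs ! b)" if "a \<le> b" "b < 2 * h" for a b
    using assms(1,3) that by (simp add: sorted_iff_nth_mono)
  have "xs ! j \<in> ?class" if "j \<in> {i..i + h}" for j
    using mono[of i j] mono[of j "i + h"] that eq assms(3,4) by simp
  hence "(!) xs ` {i..i + h} \<subseteq> ?class" by blast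
  moreover have "inj_on ((!) xs) {i..i + h}"
    using nth_eq_iff_index_eq[OF assms(2)] assms(3,4) by (simp add: inj_on_def)
  ultimately have "h + 1 \<le> card ?class"
    using card_mono[of ?class "(!) xs ` {i..i + h}"] card_image[of "(!) xs" "{i..i + h}"] by simp
  moreover have "card ?class \<le> h"
    using small[of "xs ! i"] assms(3,4) by simp
  ultimately show False by simp
qed

lemma perfect_matching_separating:
  fixes key :: "nat \<Rightarrow> 'b::linorder"
  assumes "even m" and small: "\<And>w. w < m \<Longrightarrow> 2 * card {v \<in> {0..<m}. key v = key w} \<le> m"
  shows "\<exists>y. perfect_matching m y \<and> (\<forall>e\<in>y. \<exists>u v. e = {u, v} \<and> key u \<noteq> key v)"
proof -
  define xs where "xs = sort_key key [0..<m]"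
  obtain h where m: "m = 2 * h" using assms(1) by blast
  have xs: "distinct xs" "set xs = {0..<2 * h}" "length xs = 2 * h" "sorted (map key xs)"
    by (simp_all add: xs_def m)
  have "key (xs ! i) \<noteq> key (xs ! (i + h))" if "i < h" for i
    using sorted_key_nth_half_apart_differs[OF xs(4,1,3) that] small xs(2) m
    by (simp add: atLeast0LessThan)
  thus ?thesis
    using perfect_matching_halves[OF xs(1,2)] m by blast
qed

lemma large_component_exists:
  assumes "graph {0..<m} E" "even m"
    and hit: "\<And>y. perfect_matching m y \<Longrightarrow> y \<inter> E \<noteq> {}"
  shows "\<exists>v<m. m < 2 * card (component_of E v)"
proof (rule ccontr)
  assume "\<not> ?thesis"
  hence small: "2 * card (component_of E v) \<le> m" if "v < m" for v
    using that leI by blast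
  define key where "key v = Min (component_of E v)" for v
  have self: "v \<in> component_of E v" for v
    by (simp add: component_of_def)
  have finite: "finite (component_of E v)" if "v < m" for v
    using component_of_subset[OF assms(1)] that finite_subset by fastforce
  have component_key: "component_of E (key v) = component_of E v" if "v < m" for v
    unfolding key_def using component_of_Min[OF assms(1)] that by simp
  have "2 * card {v \<in> {0..<m}. key v = key w} \<le> m" if "w < m" for w
  proof -
    have "{v \<in> {0..<m}. key v = key w} \<subseteq> component_of E w"
    proof
      fix v assume "v \<in> {v \<in> {0..<m}. key v = key w}"
      hence "component_of E v = component_of E w"
        using component_key[of v] component_key[OF that] by force
      thus "v \<in> component_of E w" using self by blast
    qed
    hence "card {v \<in> {0..<m}. key v = key w} \<le> card (component_of E w)"
      by (rule card_mono[OF finite[OF that]])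
    thus ?thesis
      using small[OF that] by linarith
  qed
  then obtain y where y: "perfect_matching m y" "\<forall>e\<in>y. \<exists>u v. e = {u, v} \<and> key u \<noteq> key v"
    using perfect_matching_separating[OF assms(2)] by blast
  obtain e where e: "e \<in> y" "e \<in> E"
    using hit[OF y(1)] by blast
  then obtain u v where uv: "e = {u, v}" "key u \<noteq> key v"
    using y(2) by meson
  hence "(u, v) \<in> (adjacent E)\<^sup>*"
    using e(2) by (auto simp: adjacent_def)
  hence "component_of E u = component_of E v"
    by (rule component_of_eq)
  thus False
    using uv(2) unfolding key_def by simp
qed

lemma xorl_commute: "xorl u v = xorl v u"
  unfolding xorl_def by (induction u v rule: list_induct2') auto

lemma wins_parity:
  assumes "wins m x y a eb" "fst eb = {u, v}"
  shows "(x ! u \<noteq> x ! v) = dotp (xorl (bin (Lbits m) u) (bin (Lbits m) v)) (xorl a (snd eb))"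
proof -
  obtain b1 b2 where "fst eb = {b1, b2}"
    and parity: "(x ! b1 \<noteq> x ! b2) = dotp (xorl (bin (Lbits m) b1) (bin (Lbits m) b2)) (xorl a (snd eb))"
    using assms(1) unfolding wins_def by blast
  with assms(2) consider "u = b1" "v = b2" | "u = b2" "v = b1"
    by (auto simp: doubleton_eq_iff)
  thus ?thesis
    using parity xorl_commute by cases auto
qed

lemma card_le_card_colourings:
  assumes "graph {0..<m} E" "\<forall>x\<in>X. length x = m"
    and "\<forall>x\<in>X. colouring {0..<m} E h ((!) x)"
  shows "card X \<le> card (colourings {0..<m} E h)"
proof (rule card_inj_on_le)
  let ?restr = "\<lambda>x. restrict ((!) x) {0..<m}"
  have "colouring {0..<m} E h (?restr x)" if "x \<in> X" for x
    using assms that unfolding colouring_def graph_def by (metis insert_subset restrict_apply')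
  thus "?restr ` X \<subseteq> colourings {0..<m} E h"
    unfolding colourings_def by auto
  show "inj_on ?restr X"
  proof (rule inj_onI)
    fix x x' assume "x \<in> X" "x' \<in> X" "?restr x = ?restr x'"
    thus "x = x'"
      using assms(2) by (metis atLeastLessThan_iff nth_equalityI restrict_apply' zero_le)
  qed
  show "finite (colourings {0..<m} E h)"
    by (rule finite_subset[of _ "{0..<m} \<rightarrow>\<^sub>E (UNIV :: bool set)"])
      (auto simp: colourings_def intro: finite_PiE)
qed

lemma card_bit_strings: "card {x :: bool list. length x = n} = 2 ^ n"
  using card_lists_length_eq[of "UNIV :: bool set" n] by simp

lemma exists_large_fibre_bit_strings:
  fixes f :: "bool list \<Rightarrow> bool list"
  assumes "\<And>x. length x = m \<Longrightarrow> length (f x) = L"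
  obtains x0 where "length x0 = m" "2 ^ m \<le> 2 ^ L * card {x. length x = m \<and> f x = f x0}"
proof -
  have finite: "finite {x :: bool list. length x = n}" for n
    using finite_lists_length_eq[of "UNIV :: bool set" n] by simp
  have "replicate L False \<in> {a. length a = L}"
    by simp
  hence nonempty: "{a :: bool list. length a = L} \<noteq> {}"
    by blast
  have "f \<in> {x. length x = m} \<rightarrow> {a. length a = L}"
    using assms by simp
  from pigeonhole_card[OF this finite finite nonempty] obtain a where
    "card {x :: bool list. length x = m} \<le> card (f -` {a} \<inter> {x. length x = m}) * card {a :: bool list. length a = L}"
    by blast
  moreover have "f -` {a} \<inter> {x. length x = m} = {x. length x = m \<and> f x = a}"
    by blast
  ultimately have fibre: "2 ^ m \<le> 2 ^ L * card {x. length x = m \<and> f x = a}"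
    by (simp add: card_bit_strings mult.commute)
  hence "{x. length x = m \<and> f x = a} \<noteq> {}"
    by (intro notI) simp
  then obtain x0 where "length x0 = m" "f x0 = a"
    by blast
  with fibre show ?thesis
    using that by blast
qed

definition bob_edges :: "(nat set set \<Rightarrow> nat set \<times> bool list) \<Rightarrow> nat \<Rightarrow> nat set set" where
  "bob_edges sB m = (\<lambda>y. fst (sB y)) ` {y. perfect_matching m y}"

definition edge_parity :: "bool list \<Rightarrow> nat set \<Rightarrow> bool" where
  "edge_parity x e \<longleftrightarrow> (\<exists>u\<in>e. \<exists>v\<in>e. x ! u \<noteq> x ! v)"

lemma edge_parity_doubleton [simp]: "edge_parity x {u, v} = (x ! u \<noteq> x ! v)"
  by (auto simp: edge_parity_def)

lemma graph_bob_edges: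
  assumes "\<And>y. perfect_matching m y \<Longrightarrow> card (fst (sB y)) = 2 \<and> fst (sB y) \<subseteq> {0..<m}"
  shows "graph {0..<m} (bob_edges sB m)"
  using assms by (auto simp: graph_def bob_edges_def)

lemma matching_meets_bob_edges:
  assumes "perfect_matching m y" "wins m x y a (sB y)"
  shows "y \<inter> bob_edges sB m \<noteq> {}"
  using assms by (auto simp: wins_def bob_edges_def)

lemma colouring_bob_edges:
  assumes "\<And>y. perfect_matching m y \<Longrightarrow> wins m x y a (sB y)"
    and "\<And>y. perfect_matching m y \<Longrightarrow> wins m x0 y a (sB y)"
  shows "colouring V (bob_edges sB m) (edge_parity x0) ((!) x)"
  unfolding colouring_def
proof (intro allI impI)
  fix u v assume "{u, v} \<in> bob_edges sB m"
  then obtain y where "perfect_matching m y" "fst (sB y) = {u, v}"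
    by (auto simp: bob_edges_def)
  hence "(x ! u \<noteq> x ! v) = (x0 ! u \<noteq> x0 ! v)"
    using wins_parity assms by metis
  thus "(x ! u \<noteq> x ! v) = edge_parity x0 {u, v}"
    by simp
qed

lemma card_answer_fibre_le_card_colourings:
  assumes winning: "\<And>x y. length x = m \<Longrightarrow> perfect_matching m y \<Longrightarrow> wins m x y (sA x) (sB y)"
    and graph: "graph {0..<m} (bob_edges sB m)" and "length x0 = m"
  shows "card {x. length x = m \<and> sA x = sA x0}
           \<le> card (colourings {0..<m} (bob_edges sB m) (edge_parity x0))"
proof (rule card_le_card_colourings[OF graph])
  show "\<forall>x\<in>{x. length x = m \<and> sA x = sA x0}.
          colouring {0..<m} (bob_edges sB m) (edge_parity x0) ((!) x)"
  proof
    fix x assume x: "x \<in> {x. length x = m \<and> sA x = sA x0}"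
    show "colouring {0..<m} (bob_edges sB m) (edge_parity x0) ((!) x)"
      by (rule colouring_bob_edges[where a = "sA x0"])
        (use winning[of x] winning[OF \<open>length x0 = m\<close>] x in simp_all)
  qed
qed simp

theorem corollary1:
  fixes m :: nat
  assumes "m > 0" and "even m"
    and "classical_winning_strategy_exists m"
  shows "\<exists>(V :: nat set) (E :: nat set set) (h :: nat set \<Rightarrow> bool).
           graph V E \<and> card V = m \<and>
           real (card (colourings V E h)) \<ge> 2 ^ m / 2 ^ Lbits m \<and>
           (\<exists>C. connected_component V E C \<and> real (card C) > real m / 2)"
proof -
  obtain sA sB where
    answer_length: "\<And>x. length x = m \<Longrightarrow> length (sA x) = Lbits m" and
    edge: "\<And>y. perfect_matching m y \<Longrightarrow> card (fst (sB y)) = 2 \<and> fst (sB y) \<subseteq> {0..<m}" and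
    winning: "\<And>x y. length x = m \<Longrightarrow> perfect_matching m y \<Longrightarrow> wins m x y (sA x) (sB y)"
    using assms(3) unfolding classical_winning_strategy_exists_def by blast
  obtain x0 where x0: "length x0 = m"
    and fibre: "2 ^ m \<le> 2 ^ Lbits m * card {x. length x = m \<and> sA x = sA x0}"
    using exists_large_fibre_bit_strings answer_length by blast
  define E where "E = bob_edges sB m"
  have graph: "graph {0..<m} E"
    unfolding E_def using edge by (rule graph_bob_edges)
  have "2 ^ m \<le> 2 ^ Lbits m * card (colourings {0..<m} E (edge_parity x0))"
    using fibre card_answer_fibre_le_card_colourings[OF winning graph[unfolded E_def] x0]
    unfolding E_def by (meson le_trans mult_le_mono2)
  hence "real (2 ^ m) \<le> real (2 ^ Lbits m * card (colourings {0..<m} E (edge_parity x0)))"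
    by (simp only: of_nat_le_iff)
  hence colourings: "real (card (colourings {0..<m} E (edge_parity x0))) \<ge> 2 ^ m / 2 ^ Lbits m"
    by (simp add: pos_divide_le_eq mult.commute)
  have "y \<inter> E \<noteq> {}" if "perfect_matching m y" for y
    unfolding E_def using that winning[OF x0 that] by (rule matching_meets_bob_edges)
  then obtain v where v: "v < m" "m < 2 * card (component_of E v)"
    using large_component_exists[OF graph assms(2)] by blast
  hence "connected_component {0..<m} E (component_of E v)"
        "real (card (component_of E v)) > real m / 2"
    using graph by (simp_all add: connected_component_component_of)
  thus ?thesis
    using graph colourings by (intro exI[of _ "{0..<m}"] exI[of _ E] exI[of _ "edge_parity x0"]) auto
qed

end
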